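(* Let $\{\mu_1,\dots,\mu_k\}\subset\mathbb{R}^d$ be distinct points with minimum separation $\Delta=\min_{i\neq j}\|\mu_i-\mu_j\|_2$. Let $t_1,\dots,t_J$ be independent random vectors drawn uniformly from the unit sphere $\mathbb{S}^{d-1}$. For any $\delta\in(0,1)$, if $J\ge\lceil\log_2(1/\delta)\rceil$, then with probability at least $1-\delta$ there exists an index $n\in\{1,\dots,J\}$ such that $$\min_{i\neq j}|\langle \mu_i-\mu_j,t_n\rangle|\ge\frac{\Delta}{k^2\sqrt d}.$$ *)

theory Defs
  imports "HOL-Probability.Probability"
begin

text \<open>Uniform (normalized surface) probability measure on the unit sphere of real^'d,
  realised as the radial projection of the uniform distribution on the unit ball
  (cone measure, which coincides with normalized surface measure for the sphere).\<close>
definition sphere_uniform :: "(real ^ 'd) measure" where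
  "sphere_uniform = distr (uniform_measure lborel (cball (0::real^'d) 1)) borel
                          (\<lambda>x. x /\<^sub>R norm x)"

definition min_sep :: "(nat \<Rightarrow> real ^ 'd) \<Rightarrow> nat \<Rightarrow> real" where
  "min_sep \<mu> k = Min {norm (\<mu> i - \<mu> j) | i j. i \<in> {1..k} \<and> j \<in> {1..k} \<and> i \<noteq> j}"

end

theory Submission
  imports Defs
begin

(* Fix a pair i \<noteq> j and put v = mu i - mu j. A direction t = x / norm x coming from a point x of
   the unit ball B with |<v, t>| < c forces x into the slab |<v / norm v, x>| \<le> c / norm v.
   Lebesgue measure is rotation invariant, so the slab may be taken orthogonal to a coordinate axis;
   slicing B along that axis bounds its volume by 2 (c / norm v) vol(B^(d-1)), and the log-convexity
   of Gamma gives 2 vol(B^(d-1)) \<le> sqrt d vol(B^d). With c = Delta / (k^2 sqrt d) and norm v \<ge> Delta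
   a fixed pair is badly projected with probability at most 1/k^2; a union bound over the at most
   k^2/2 unordered pairs shows that one random direction fails with probability at most 1/2, and
   J independent directions all fail with probability at most 2^-J \<le> delta. *)

(* The library proves rotation invariance of Lebesgue measure only for index types of class
   wellorder; an arbitrary finite index type is transported to this copy of itself, ordered
   through to_nat. *)
typedef 'a numbered = "UNIV :: 'a set" by simp

instantiation numbered :: (countable) linorder
begin
definition less_eq_numbered where "x \<le> y \<longleftrightarrow> to_nat (Rep_numbered x) \<le> to_nat (Rep_numbered y)"
definition less_numbered where "x < y \<longleftrightarrow> to_nat (Rep_numbered x) < to_nat (Rep_numbered y)"
instance
proof
  fix x y z :: "'a numbered"
  show "x < y \<longleftrightarrow> x \<le> y \<and> \<not> y \<le> x"
    by (auto simp: less_eq_numbered_def less_numbered_def)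
  show "x \<le> x"
    by (simp add: less_eq_numbered_def)
  show "x \<le> y \<Longrightarrow> y \<le> z \<Longrightarrow> x \<le> z"
    by (simp add: less_eq_numbered_def)
  show "x \<le> y \<Longrightarrow> y \<le> x \<Longrightarrow> x = y"
    by (simp add: less_eq_numbered_def flip: Rep_numbered_inject)
  show "x \<le> y \<or> y \<le> x"
    by (auto simp: less_eq_numbered_def)
qed
end

instance numbered :: (countable) wellorder
proof (rule wf_wellorderI)
  have "wf (inv_image {(m, n). m < n} (\<lambda>x::'a numbered. to_nat (Rep_numbered x)))"
    by (intro wf_inv_image wf_less)
  then show "wf {(x :: 'a numbered, y). x < y}"
    by (simp add: inv_image_def less_numbered_def)
qed intro_classes

instance numbered :: (finite) finite
proof
  have "(UNIV :: 'a numbered set) = Abs_numbered ` UNIV"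
    by (rule type_definition.Abs_image[OF type_definition_numbered, symmetric])
  also have "finite \<dots>"
    by (rule finite_imageI) simp
  finally show "finite (UNIV :: 'a numbered set)" .
qed

lemma prod_Basis_vec: "(\<Prod>b\<in>(Basis :: (real^'n) set). f b) = (\<Prod>i\<in>UNIV. f (axis i 1))"
proof -
  have B: "(Basis :: (real^'n) set) = range (\<lambda>i. axis i 1)"
    by (auto simp: Basis_vec_def)
  have "inj (\<lambda>i::'n. axis i (1::real))"
    by (auto simp: inj_on_def axis_eq_axis)
  then show ?thesis
    by (simp only: B prod.reindex o_def)
qed

lemma borel_measurable_linear:
  fixes f :: "'a::euclidean_space \<Rightarrow> 'b::euclidean_space"
  assumes "linear f"
  shows "f \<in> borel_measurable borel"
  using assms by (intro borel_measurable_continuous_onI linear_continuous_on)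
    (simp add: linear_conv_bounded_linear[symmetric])

lemma linear_vec_reindex: "linear (\<lambda>x::real^'n. (\<chi> i. x $ \<sigma> i) :: real^'m)"
  by (auto intro!: linearI simp: vec_eq_iff)

lemma lborel_distr_vec_reindex:
  fixes \<sigma> :: "'m::finite \<Rightarrow> 'n::finite"
  assumes "bij \<sigma>"
  shows "distr lborel borel (\<lambda>x::real^'n. \<chi> i. x $ \<sigma> i) = (lborel :: (real^'m) measure)"
proof (rule lborel_eqI[symmetric])
  fix l u :: "real^'m"
  assume le: "\<And>b. b \<in> Basis \<Longrightarrow> l \<bullet> b \<le> u \<bullet> b"
  have lu: "l $ i \<le> u $ i" for i
    using le[of "axis i 1"] by (simp add: cart_eq_inner_axis)
  let ?\<tau> = "inv \<sigma>"
  have \<tau>: "bij ?\<tau>" "\<And>i. ?\<tau> (\<sigma> i) = i" "\<And>j. \<sigma> (?\<tau> j) = j"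
    using assms by (auto simp: bij_imp_bij_inv bij_is_inj bij_is_surj surj_f_inv_f)
  have all_reindex: "(\<forall>i. P i (\<sigma> i)) \<longleftrightarrow> (\<forall>j. P (?\<tau> j) j)" for P :: "'m \<Rightarrow> 'n \<Rightarrow> bool"
    by (metis \<tau>(2,3))
  have "(\<lambda>x::real^'n. \<chi> i. x $ \<sigma> i) -` box l u = box (\<chi> j. l $ ?\<tau> j) (\<chi> j. u $ ?\<tau> j)"
    by (auto simp: mem_box_cart all_reindex[where P = "\<lambda>i j. l $ i < _ $ j \<and> _ $ j < u $ i"])
  moreover have "(\<lambda>x::real^'n. \<chi> i. x $ \<sigma> i) \<in> borel_measurable lborel"
    using borel_measurable_linear[OF linear_vec_reindex] by simp
  moreover have "\<forall>b\<in>Basis. (\<chi> j. l $ ?\<tau> j) \<bullet> b \<le> (\<chi> j. u $ ?\<tau> j) \<bullet> b"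
    using lu by (auto simp: Basis_vec_def inner_axis)
  moreover have "(\<Prod>j\<in>UNIV. u $ ?\<tau> j - l $ ?\<tau> j) = (\<Prod>i\<in>UNIV. u $ i - l $ i)"
    using prod.reindex_bij_betw[OF \<tau>(1), of "\<lambda>i. u $ i - l $ i"] by simp
  ultimately show "emeasure (distr lborel borel (\<lambda>x::real^'n. \<chi> i. x $ \<sigma> i)) (box l u)
      = (\<Prod>b\<in>Basis. (u - l) \<bullet> b)"
    using lu by (simp add: emeasure_distr emeasure_lborel_box_eq prod_Basis_vec inner_axis)
qed simp

lemma lborel_distr_orthogonal_wellorder:
  fixes T :: "real^'n::{finite,wellorder} \<Rightarrow> real^'n::_"
  assumes T: "orthogonal_transformation T"
  shows "distr lborel borel T = lborel"
proof (rule lborel_eqI[symmetric])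
  fix l u :: "real^'n::{finite,wellorder}"
  assume le: "\<And>b. b \<in> Basis \<Longrightarrow> l \<bullet> b \<le> u \<bullet> b"
  have meas: "T \<in> borel_measurable borel"
    using T by (intro borel_measurable_linear orthogonal_transformation_linear)
  have pre: "T -` box l u = inv T ` box l u"
    using T by (simp add: bij_vimage_eq_inv_image orthogonal_transformation_bij)
  have "T -` box l u \<in> sets lborel"
    using measurable_sets_borel[OF meas] by simp
  then have "emeasure (distr lborel borel T) (box l u) = emeasure lebesgue (inv T ` box l u)"
    using meas by (simp add: emeasure_distr pre[symmetric])
  also have "\<dots> = measure lebesgue (box l u)"
    using T by (simp add: emeasure_eq_measure2 measurable_orthogonal_image measure_orthogonal_image
        orthogonal_transformation_inv)
  also have "\<dots> = (\<Prod>b\<in>Basis. (u - l) \<bullet> b)"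
    using le by (simp add: measure_lborel_box_eq)
  finally show "emeasure (distr lborel borel T) (box l u) = (\<Prod>b\<in>Basis. (u - l) \<bullet> b)" .
qed simp

lemma inner_vec_reindex:
  fixes \<sigma> :: "'m::finite \<Rightarrow> 'n::finite"
  assumes "bij \<sigma>"
  shows "(\<chi> i. x $ \<sigma> i) \<bullet> (\<chi> i. y $ \<sigma> i) = x \<bullet> (y :: real^'n)"
  using sum.reindex_bij_betw[OF assms, of "\<lambda>j. x $ j * y $ j"] by (simp add: inner_vec_def)

lemma lborel_distr_orthogonal:
  fixes T :: "real^'n::finite \<Rightarrow> real^'n"
  assumes T: "orthogonal_transformation T"
  shows "distr lborel borel T = lborel"
proof -
  let ?\<Phi> = "\<lambda>x::real^'n. \<chi> i. x $ Rep_numbered i"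
  let ?\<Psi> = "\<lambda>y::real^'n numbered. \<chi> j. y $ Abs_numbered j"
  have bij: "bij (Rep_numbered :: 'n numbered \<Rightarrow> 'n)" "bij (Abs_numbered :: 'n \<Rightarrow> 'n numbered)"
    by (metis Abs_numbered_inverse Rep_numbered_inverse UNIV_I bij_betw_byWitness subsetI)+
  have \<Psi>: "distr lborel borel ?\<Psi> = lborel"
    by (rule lborel_distr_vec_reindex[OF bij(2)])
  have \<Psi>_meas: "?\<Psi> \<in> borel_measurable borel"
    by (rule borel_measurable_linear[OF linear_vec_reindex])
  define T' where "T' = ?\<Phi> \<circ> T \<circ> ?\<Psi>"
  have "orthogonal_transformation T'"
    unfolding orthogonal_transformation_def T'_def
  proof
    show "linear (?\<Phi> \<circ> T \<circ> ?\<Psi>)"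
      using T by (intro linear_compose linear_vec_reindex orthogonal_transformation_linear)
    show "\<forall>v w. (?\<Phi> \<circ> T \<circ> ?\<Psi>) v \<bullet> (?\<Phi> \<circ> T \<circ> ?\<Psi>) w = v \<bullet> w"
      using T by (simp add: inner_vec_reindex bij orthogonal_transformation_def)
  qed
  then have T': "distr lborel borel T' = lborel" and T'_meas: "T' \<in> borel_measurable borel"
    by (auto intro: lborel_distr_orthogonal_wellorder borel_measurable_linear orthogonal_transformation_linear)
  have T_meas: "T \<in> borel_measurable borel"
    using T by (intro borel_measurable_linear orthogonal_transformation_linear)
  have "T \<circ> ?\<Psi> = ?\<Psi> \<circ> T'"
    by (simp add: T'_def fun_eq_iff vec_eq_iff Abs_numbered_inverse)
  have "distr lborel borel T = distr (distr lborel borel ?\<Psi>) borel T"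
    by (simp add: \<Psi>)
  also have "\<dots> = distr lborel borel (T \<circ> ?\<Psi>)"
    using \<Psi>_meas T_meas by (simp add: distr_distr)
  also have "\<dots> = distr lborel borel (?\<Psi> \<circ> T')"
    by (simp add: \<open>T \<circ> ?\<Psi> = ?\<Psi> \<circ> T'\<close>)
  also have "\<dots> = distr (distr lborel borel T') borel ?\<Psi>"
    using \<Psi>_meas T'_meas by (simp add: distr_distr)
  also have "\<dots> = lborel"
    by (simp add: T' \<Psi>)
  finally show ?thesis .
qed

lemma emeasure_PiM_slab_cylinder:
  assumes "finite A" "i \<notin> A" "e \<ge> 0"
  shows "emeasure (Pi\<^sub>M (insert i A) (\<lambda>_. lborel))
      ({f. \<bar>f i\<bar> \<le> e \<and> sqrt (\<Sum>j\<in>A. (f j)\<^sup>2) \<le> 1} \<inter> space (Pi\<^sub>M (insert i A) (\<lambda>_. lborel)))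
    = ennreal (2 * e * unit_ball_vol (real (card A)))"
proof -
  interpret product_sigma_finite "\<lambda>_. lborel"
    by standard
  let ?C = "{f. \<bar>f i\<bar> \<le> e \<and> sqrt (\<Sum>j\<in>A. (f j)\<^sup>2) \<le> 1} \<inter> space (Pi\<^sub>M (insert i A) (\<lambda>_. lborel))"
  let ?B = "{f. sqrt (\<Sum>j\<in>A. (f j)\<^sup>2) \<le> 1} \<inter> space (Pi\<^sub>M A (\<lambda>_. lborel))"
  have "emeasure (Pi\<^sub>M (insert i A) (\<lambda>_. lborel)) ?C = (\<integral>\<^sup>+ f. indicator ?C f \<partial>Pi\<^sub>M (insert i A) (\<lambda>_. lborel))"
    by (subst nn_integral_indicator) auto
  also have "\<dots> = (\<integral>\<^sup>+ y. \<integral>\<^sup>+ x. indicator ?C (x(i := y)) \<partial>Pi\<^sub>M A (\<lambda>_. lborel) \<partial>lborel)"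
    using assms by (subst product_nn_integral_insert_rev) auto
  also have "\<dots> = (\<integral>\<^sup>+ y. indicator {-e..e} y * emeasure (Pi\<^sub>M A (\<lambda>_. lborel)) ?B \<partial>lborel)"
  proof (rule nn_integral_cong)
    fix y :: real
    have "indicator ?C (x(i := y)) = indicator {-e..e} y * (indicator ?B x :: ennreal)"
      if "x \<in> space (Pi\<^sub>M A (\<lambda>_. lborel))" for x
    proof -
      have "(\<Sum>j\<in>A. ((x(i := y)) j)\<^sup>2) = (\<Sum>j\<in>A. (x j)\<^sup>2)"
        using assms by (intro sum.cong) auto
      then show ?thesis
        using that by (auto simp: indicator_def PiE_def space_PiM abs_le_iff)
    qed
    then have "(\<integral>\<^sup>+ x. indicator ?C (x(i := y)) \<partial>Pi\<^sub>M A (\<lambda>_. lborel))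
        = (\<integral>\<^sup>+ x. indicator {-e..e} y * indicator ?B x \<partial>Pi\<^sub>M A (\<lambda>_. lborel))"
      by (rule nn_integral_cong)
    also have "\<dots> = indicator {-e..e} y * emeasure (Pi\<^sub>M A (\<lambda>_. lborel)) ?B"
      by (subst nn_integral_cmult) auto
    finally show "(\<integral>\<^sup>+ x. indicator ?C (x(i := y)) \<partial>Pi\<^sub>M A (\<lambda>_. lborel))
        = indicator {-e..e} y * emeasure (Pi\<^sub>M A (\<lambda>_. lborel)) ?B" .
  qed
  also have "\<dots> = (\<integral>\<^sup>+ y. ennreal (unit_ball_vol (real (card A))) * indicator {-e..e} y \<partial>lborel)"
    using assms by (subst emeasure_cball_aux) (auto simp: mult.commute)
  also have "\<dots> = ennreal (2 * e * unit_ball_vol (real (card A)))"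
    using assms by (subst nn_integral_cmult) (auto simp: ennreal_mult' mult.commute)
  finally show ?thesis .
qed

lemma emeasure_unit_ball_slab_Basis:
  fixes b :: "'a::euclidean_space"
  assumes "b \<in> Basis" "e \<ge> 0"
  shows "emeasure lborel {x::'a. norm x \<le> 1 \<and> \<bar>x \<bullet> b\<bar> \<le> e}
    \<le> ennreal (2 * e * unit_ball_vol (real (DIM('a) - 1)))"
proof -
  let ?A = "Basis - {b} :: 'a set"
  let ?P = "Pi\<^sub>M Basis (\<lambda>_. lborel)"
  let ?v = "\<lambda>f. \<Sum>c\<in>Basis. f c *\<^sub>R c :: 'a"
  have "\<bar>f b\<bar> \<le> e \<and> sqrt (\<Sum>j\<in>?A. (f j)\<^sup>2) \<le> 1"
    if "norm (?v f) \<le> 1" "\<bar>?v f \<bullet> b\<bar> \<le> e" for f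
  proof -
    have "norm (?v f) = sqrt (\<Sum>c\<in>Basis. (f c)\<^sup>2)"
      by (subst euclidean_dist_l2[of 0, simplified]) (auto simp: L2_set_def)
    moreover have "?v f \<bullet> b = f b"
      using assms(1) by (simp add: inner_sum_left inner_Basis if_distrib cong: if_cong)
    moreover have "(\<Sum>j\<in>?A. (f j)\<^sup>2) \<le> (\<Sum>c\<in>Basis. (f c)\<^sup>2)"
      by (intro sum_mono2) auto
    ultimately show ?thesis
      using that by (metis order_trans real_sqrt_le_mono)
  qed
  then have sub: "{f. norm (?v f) \<le> 1 \<and> \<bar>?v f \<bullet> b\<bar> \<le> e} \<inter> space ?P
      \<subseteq> {f. \<bar>f b\<bar> \<le> e \<and> sqrt (\<Sum>j\<in>?A. (f j)\<^sup>2) \<le> 1} \<inter> space ?P"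
    by blast
  have "emeasure lborel {x::'a. norm x \<le> 1 \<and> \<bar>x \<bullet> b\<bar> \<le> e}
      = emeasure (distr ?P borel ?v) {x. norm x \<le> 1 \<and> \<bar>x \<bullet> b\<bar> \<le> e}"
    by (simp only: lborel_eq[where 'a='a])
  also have "\<dots> = emeasure ?P ({f. norm (?v f) \<le> 1 \<and> \<bar>?v f \<bullet> b\<bar> \<le> e} \<inter> space ?P)"
    by (subst emeasure_distr) (auto simp: vimage_def Int_def)
  also have "\<dots> \<le> emeasure ?P ({f. \<bar>f b\<bar> \<le> e \<and> sqrt (\<Sum>j\<in>?A. (f j)\<^sup>2) \<le> 1} \<inter> space ?P)"
    using sub assms(1) by (intro emeasure_mono) measurable
  also have "\<dots> = ennreal (2 * e * unit_ball_vol (real (DIM('a) - 1)))"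
    using assms emeasure_PiM_slab_cylinder[of ?A b e] by (simp add: insert_absorb card_Diff_singleton)
  finally show ?thesis .
qed

lemma Gamma_plus_half_le:
  fixes x :: real
  assumes x: "x > 0"
  shows "Gamma (x + 1/2) \<le> sqrt x * Gamma x"
proof -
  have "ln (Gamma ((1 - 1/2) * x + (1/2) * (x + 1))) \<le> (1 - 1/2) * ln (Gamma x) + (1/2) * ln (Gamma (x + 1))"
    using convex_onD[OF log_convex_Gamma_real, of "1/2" x "x + 1"] x by simp
  moreover have "Gamma (x + 1) = x * Gamma x"
    using Gamma_plus1[of x] x nonpos_Ints_nonpos[of x] by force
  ultimately have "ln (Gamma (x + 1/2)) \<le> ln (sqrt x * Gamma x)"
    using x Gamma_real_pos[of x] by (simp add: ln_mult_pos ln_sqrt field_simps)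
  then show ?thesis
    using x Gamma_real_pos[of x] Gamma_real_pos[of "x + 1/2"] by simp
qed

lemma unit_ball_vol_ratio_le:
  assumes d: "d \<ge> 1"
  shows "2 * unit_ball_vol (real (d - 1)) \<le> sqrt (real d) * unit_ball_vol (real d)"
proof -
  have key: "2 * Gamma (real d / 2 + 1) \<le> sqrt (real d) * sqrt pi * Gamma ((real d - 1) / 2 + 1)"
  proof (cases "d = 1")
    case True
    have "(1/2 :: real) \<notin> \<int>\<^sub>\<le>\<^sub>0"
      using nonpos_Ints_nonpos by force
    then have "Gamma (3/2 :: real) = sqrt pi / 2"
      using Gamma_plus1[of "1/2::real"] by (simp add: Gamma_one_half_real)
    then show ?thesis
      using True by simp
  next
    case False
    let ?x = "(real d + 1) / 2"
    have "(2 * sqrt ?x)\<^sup>2 = 2 * (real d + 1)"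
      by (simp add: power_mult_distrib)
    also have "\<dots> \<le> real d * 3"
      using False d by simp
    also have "\<dots> \<le> real d * pi"
      using pi_gt3 by (intro mult_left_mono) auto
    also have "\<dots> = (sqrt (real d) * sqrt pi)\<^sup>2"
      by (simp add: power_mult_distrib)
    finally have "2 * sqrt ?x \<le> sqrt (real d) * sqrt pi"
      by (rule power2_le_imp_le) simp
    have "2 * Gamma (real d / 2 + 1) = 2 * Gamma (?x + 1/2)"
      by (simp add: field_simps)
    also have "\<dots> \<le> 2 * sqrt ?x * Gamma ?x"
      using Gamma_plus_half_le[of ?x] by simp
    also have "\<dots> \<le> sqrt (real d) * sqrt pi * Gamma ?x"
      using \<open>2 * sqrt ?x \<le> sqrt (real d) * sqrt pi\<close> Gamma_real_pos[of ?x]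
      by (intro mult_right_mono) auto
    also have "?x = (real d - 1) / 2 + 1"
      by (simp add: field_simps)
    finally show ?thesis .
  qed
  have pi: "pi powr ((real d - 1) / 2) = pi powr (real d / 2) / sqrt pi"
    by (simp add: diff_divide_distrib powr_diff powr_half_sqrt)
  have "Gamma ((real d - 1) / 2 + 1) > 0" "Gamma (real d / 2 + 1) > 0"
    using d by (auto simp: field_simps)
  then have "2 * (pi powr (real d / 2) / sqrt pi) / Gamma ((real d - 1) / 2 + 1)
      \<le> sqrt (real d) * (pi powr (real d / 2) / Gamma (real d / 2 + 1))"
    using key by (simp add: field_simps)
  then show ?thesis
    using d by (simp add: unit_ball_vol_def pi)
qed

lemma measure_unit_ball_slab_le:
  fixes u :: "real^'n"
  assumes u: "norm u = 1" and e: "e \<ge> 0"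
  shows "measure lborel {x. norm x \<le> 1 \<and> \<bar>u \<bullet> x\<bar> \<le> e}
    \<le> e * sqrt (real CARD('n)) * unit_ball_vol (real CARD('n))"
proof -
  obtain b :: 'n where True by blast
  obtain T :: "real^'n \<Rightarrow> real^'n" where T: "orthogonal_transformation T" "T u = axis b 1"
    using orthogonal_transformation_exists[of u "axis b 1"] u by auto
  let ?S = "{x::real^'n. norm x \<le> 1 \<and> \<bar>x \<bullet> axis b 1\<bar> \<le> e}"
  have "T x \<bullet> axis b 1 = u \<bullet> x" for x
    using T unfolding orthogonal_transformation_def by (metis inner_commute)
  then have pre: "T -` ?S \<inter> space lborel = {x. norm x \<le> 1 \<and> \<bar>u \<bullet> x\<bar> \<le> e}"
    using T(1) by (auto simp: orthogonal_transformation_norm)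
  have "?S \<in> sets borel"
    by measurable
  then have "measure lborel {x. norm x \<le> 1 \<and> \<bar>u \<bullet> x\<bar> \<le> e} = measure (distr lborel borel T) ?S"
    unfolding pre[symmetric] using borel_measurable_linear[OF orthogonal_transformation_linear[OF T(1)]]
    by (subst measure_distr) simp_all
  also have "\<dots> = measure lborel ?S"
    by (simp add: lborel_distr_orthogonal T(1))
  also have "\<dots> \<le> 2 * e * unit_ball_vol (real (CARD('n) - 1))"
    unfolding measure_def using e emeasure_unit_ball_slab_Basis[of "axis b (1::real)" e]
    by (intro enn2real_leI) auto
  also have "\<dots> \<le> e * (sqrt (real CARD('n)) * unit_ball_vol (real CARD('n)))"
    using mult_left_mono[OF unit_ball_vol_ratio_le[of "CARD('n)"] e] by (simp add: Suc_leI)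
  finally show ?thesis
    by (simp add: mult.assoc)
qed

lemma prob_space_sphere_uniform: "prob_space sphere_uniform"
proof -
  have "unit_ball_vol (real CARD('d)) \<noteq> 0"
    using unit_ball_vol_pos[OF of_nat_0_le_iff[of "CARD('d)"]] by linarith
  then have "emeasure lborel (cball (0::real^'d) 1) \<noteq> 0" "emeasure lborel (cball (0::real^'d) 1) \<noteq> \<infinity>"
    by (simp_all add: emeasure_cball)
  then interpret U: prob_space "uniform_measure lborel (cball (0::real^'d) 1)"
    by (rule prob_space_uniform_measure)
  show ?thesis
    unfolding sphere_uniform_def by (rule U.prob_space_distr) measurable
qed

lemma sets_sphere_uniform_slab: "{s::real^'d. \<bar>v \<bullet> s\<bar> < c} \<in> sets sphere_uniform"
proof -
  have "{s::real^'d. \<bar>v \<bullet> s\<bar> < c} \<in> sets borel"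
    by measurable
  then show ?thesis
    by (simp add: sphere_uniform_def)
qed

lemma abs_inner_normalize_le:
  fixes v x :: "'a::real_inner"
  assumes "v \<noteq> 0" "c \<ge> 0" "norm x \<le> 1" "\<bar>v \<bullet> (x /\<^sub>R norm x)\<bar> < c"
  shows "\<bar>(v /\<^sub>R norm v) \<bullet> x\<bar> \<le> c / norm v"
proof -
  have "\<bar>v \<bullet> x\<bar> \<le> c * norm x"
  proof (cases "x = 0")
    case False
    then have "\<bar>v \<bullet> x\<bar> / norm x < c"
      using assms(4) by (simp add: abs_mult divide_inverse mult.commute)
    then show ?thesis
      using False by (simp add: divide_less_eq less_imp_le)
  qed simp
  also have "\<dots> \<le> c"
    using assms(2,3) by (simp add: mult_left_le)
  finally show ?thesis
    using assms(1) by (simp add: abs_mult divide_inverse mult.commute mult_right_mono)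
qed

lemma measure_sphere_uniform_slab_le:
  fixes v :: "real^'d"
  assumes v: "v \<noteq> 0" and c: "c \<ge> 0"
  shows "measure sphere_uniform {s. \<bar>v \<bullet> s\<bar> < c} \<le> c * sqrt (real CARD('d)) / norm v"
proof -
  let ?B = "cball (0::real^'d) 1"
  let ?f = "\<lambda>x::real^'d. x /\<^sub>R norm x"
  let ?S = "{s. \<bar>v \<bullet> s\<bar> < c}"
  let ?V = "unit_ball_vol (real CARD('d))"
  let ?slab = "{x. norm x \<le> 1 \<and> \<bar>(v /\<^sub>R norm v) \<bullet> x\<bar> \<le> c / norm v}"
  have V: "measure lborel ?B = ?V" "?V > 0"
    by (simp_all add: content_cball)
  have "?V \<noteq> 0"
    using V(2) by linarith
  then have B: "emeasure lborel ?B \<noteq> 0" "emeasure lborel ?B \<noteq> \<infinity>" "?B \<in> fmeasurable lborel"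
    by (auto simp: emeasure_cball fmeasurable_def)
  have f: "?f \<in> borel_measurable borel" and S: "?S \<in> sets borel"
    by measurable
  have "?B \<inter> ?f -` ?S \<subseteq> ?slab"
  proof clarify
    fix x :: "real^'d"
    assume x: "x \<in> ?B" "\<bar>v \<bullet> (x /\<^sub>R norm x)\<bar> < c"
    then have "norm x \<le> 1"
      by simp
    then show "norm x \<le> 1 \<and> \<bar>(v /\<^sub>R norm v) \<bullet> x\<bar> \<le> c / norm v"
      using abs_inner_normalize_le[OF v c _ x(2)] by blast
  qed
  moreover have "?slab \<in> fmeasurable lborel"
    by (rule fmeasurableI2[OF B(3)]) (auto, measurable)
  ultimately have "measure lborel (?B \<inter> ?f -` ?S) \<le> measure lborel ?slab"
    using f S by (intro measure_mono_fmeasurable) auto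
  also have "\<dots> \<le> c / norm v * sqrt (real CARD('d)) * ?V"
    using v c by (intro measure_unit_ball_slab_le) auto
  finally have "measure lborel (?B \<inter> ?f -` ?S) / ?V \<le> c * sqrt (real CARD('d)) / norm v"
    using V(2) by (simp add: divide_le_eq)
  moreover have "measure sphere_uniform ?S = measure lborel (?B \<inter> ?f -` ?S) / measure lborel ?B"
    unfolding sphere_uniform_def using f S B(1,2) by (simp add: measure_distr)
  ultimately show ?thesis
    using V(1) by simp
qed

lemma finite_min_sep_set:
  fixes \<mu> :: "nat \<Rightarrow> 'a::real_normed_vector"
  shows "finite {norm (\<mu> i - \<mu> j) | i j. i \<in> {1..k} \<and> j \<in> {1..k} \<and> i \<noteq> j}"
proof -
  have "{norm (\<mu> i - \<mu> j) | i j. i \<in> {1..k} \<and> j \<in> {1..k} \<and> i \<noteq> j}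
      \<subseteq> (\<lambda>(i, j). norm (\<mu> i - \<mu> j)) ` ({1..k} \<times> {1..k})"
    by auto
  moreover have "finite ((\<lambda>(i, j). norm (\<mu> i - \<mu> j)) ` ({1..k} \<times> {1..k}))"
    by (intro finite_imageI) simp
  ultimately show ?thesis
    by (rule finite_subset)
qed

lemma min_sep_le:
  assumes "i \<in> {1..k}" "j \<in> {1..k}" "i \<noteq> j"
  shows "min_sep \<mu> k \<le> norm (\<mu> i - \<mu> j)"
  unfolding min_sep_def using assms by (intro Min_le finite_min_sep_set) blast

lemma min_sep_nonneg:
  assumes "k \<ge> 2"
  shows "min_sep \<mu> k \<ge> 0"
proof -
  have "norm (\<mu> 1 - \<mu> 2) \<in> {norm (\<mu> i - \<mu> j) | i j. i \<in> {1..k} \<and> j \<in> {1..k} \<and> i \<noteq> j}"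
    using assms by fastforce
  then show ?thesis
    unfolding min_sep_def using finite_min_sep_set[of \<mu> k] by (subst Min_ge_iff) auto
qed

lemma card_strict_pairs_le:
  fixes A :: "'a::linorder set"
  assumes "finite A"
  shows "2 * card {(i, j). i \<in> A \<and> j \<in> A \<and> i < j} \<le> card A ^ 2"
proof -
  let ?P = "{(i, j). i \<in> A \<and> j \<in> A \<and> i < j}"
  have fin: "finite ?P"
    by (rule finite_subset[of _ "A \<times> A"]) (use assms in auto)
  have "2 * card ?P = card (?P \<union> prod.swap ` ?P)"
    using fin by (subst card_Un_disjoint) (auto simp: card_image)
  also have "\<dots> \<le> card (A \<times> A)"
    using assms by (intro card_mono) auto
  finally show ?thesis
    by (simp add: power2_eq_square card_cartesian_product)
qed

lemma Collect_distinct_pairs_eq_UN_ordered: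
  fixes A :: "'a::linorder set"
  assumes sym: "\<And>i j s. Q i j s \<longleftrightarrow> Q j i s"
  shows "{s. \<exists>i\<in>A. \<exists>j\<in>A. i \<noteq> j \<and> Q i j s}
    = (\<Union>(i, j)\<in>{(i, j). i \<in> A \<and> j \<in> A \<and> i < j}. {s. Q i j s})"
proof (intro set_eqI iffI)
  fix s
  assume "s \<in> {s. \<exists>i\<in>A. \<exists>j\<in>A. i \<noteq> j \<and> Q i j s}"
  then obtain i j where ij: "i \<in> A" "j \<in> A" "i \<noteq> j" and Q: "Q i j s"
    by auto
  show "s \<in> (\<Union>(i, j)\<in>{(i, j). i \<in> A \<and> j \<in> A \<and> i < j}. {s. Q i j s})"
  proof (cases "i < j")
    case True
    then have "(i, j) \<in> {(i, j). i \<in> A \<and> j \<in> A \<and> i < j}"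
      using ij by auto
    then show ?thesis
      by (rule UN_I) (simp add: Q)
  next
    case False
    then have "(j, i) \<in> {(i, j). i \<in> A \<and> j \<in> A \<and> i < j}"
      using ij by auto
    then show ?thesis
      by (rule UN_I) (simp add: Q sym[of j i])
  qed
next
  fix s
  assume "s \<in> (\<Union>(i, j)\<in>{(i, j). i \<in> A \<and> j \<in> A \<and> i < j}. {s. Q i j s})"
  then obtain i j where "i \<in> A" "j \<in> A" "i \<noteq> j" "Q i j s"
    by auto
  then show "s \<in> {s. \<exists>i\<in>A. \<exists>j\<in>A. i \<noteq> j \<and> Q i j s}"
    by blast
qed

lemma measure_sphere_uniform_pair_le:
  fixes \<mu> :: "nat \<Rightarrow> real ^ 'd"
  assumes k: "k \<ge> 2" and ij: "i \<in> {1..k}" "j \<in> {1..k}" "\<mu> i \<noteq> \<mu> j"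
  shows "measure sphere_uniform
      {s. \<bar>(\<mu> i - \<mu> j) \<bullet> s\<bar> < min_sep \<mu> k / (real k ^ 2 * sqrt (real CARD('d)))} \<le> 1 / real k ^ 2"
proof -
  let ?c = "min_sep \<mu> k / (real k ^ 2 * sqrt (real CARD('d)))"
  have "?c \<ge> 0"
    using min_sep_nonneg[OF k, of \<mu>] by simp
  then have "measure sphere_uniform {s. \<bar>(\<mu> i - \<mu> j) \<bullet> s\<bar> < ?c}
      \<le> ?c * sqrt (real CARD('d)) / norm (\<mu> i - \<mu> j)"
    using ij(3) measure_sphere_uniform_slab_le[of "\<mu> i - \<mu> j" ?c] by simp
  also have "\<dots> = min_sep \<mu> k / norm (\<mu> i - \<mu> j) / real k ^ 2"
    by simp
  also have "\<dots> \<le> 1 / real k ^ 2"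
  proof (rule divide_right_mono)
    show "min_sep \<mu> k / norm (\<mu> i - \<mu> j) \<le> 1"
      using min_sep_le[of i k j \<mu>] ij by (auto simp: divide_le_eq_1)
  qed simp
  finally show ?thesis .
qed

lemma measure_sphere_uniform_small_projection_le_half:
  fixes \<mu> :: "nat \<Rightarrow> real ^ 'd"
  assumes k: "k \<ge> 2" and inj: "inj_on \<mu> {1..k}"
  defines "c \<equiv> min_sep \<mu> k / (real k ^ 2 * sqrt (real CARD('d)))"
  shows "measure sphere_uniform {s. \<exists>i\<in>{1..k}. \<exists>j\<in>{1..k}. i \<noteq> j \<and> \<bar>(\<mu> i - \<mu> j) \<bullet> s\<bar> < c} \<le> 1/2"
proof -
  let ?P = "{(i, j). i \<in> {1..k} \<and> j \<in> {1..k} \<and> i < j}"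
  let ?E = "\<lambda>(i, j). {s. \<bar>(\<mu> i - \<mu> j) \<bullet> s\<bar> < c}"
  have "finite ?P"
    by (rule finite_subset[of _ "{1..k} \<times> {1..k}"]) auto
  have "\<bar>(\<mu> i - \<mu> j) \<bullet> s\<bar> < c \<longleftrightarrow> \<bar>(\<mu> j - \<mu> i) \<bullet> s\<bar> < c" for i j s
    by (metis abs_minus_commute inner_diff_left)
  then have eq: "{s. \<exists>i\<in>{1..k}. \<exists>j\<in>{1..k}. i \<noteq> j \<and> \<bar>(\<mu> i - \<mu> j) \<bullet> s\<bar> < c} = (\<Union>p\<in>?P. ?E p)"
    by (rule Collect_distinct_pairs_eq_UN_ordered)
  have E_sets: "?E p \<in> sets sphere_uniform" for p
    using sets_sphere_uniform_slab by (cases p) simp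
  have pair: "measure sphere_uniform (?E p) \<le> 1 / real k ^ 2" if "p \<in> ?P" for p
    using that inj unfolding c_def
    by (auto intro!: measure_sphere_uniform_pair_le[OF k] dest: inj_onD)
  have "measure sphere_uniform (\<Union>p\<in>?P. ?E p) \<le> (\<Sum>p\<in>?P. measure sphere_uniform (?E p))"
    using \<open>finite ?P\<close> E_sets by (rule measure_UNION_le)
  also have "\<dots> \<le> (\<Sum>p\<in>?P. 1 / real k ^ 2)"
    using pair by (rule sum_mono)
  also have "\<dots> = real (card ?P) / real k ^ 2"
    by simp
  also have "\<dots> \<le> 1/2"
  proof -
    have "2 * card ?P \<le> k ^ 2"
      using card_strict_pairs_le[of "{1..k}"] by simp
    then have "real (2 * card ?P) \<le> real (k ^ 2)"
      by (simp only: of_nat_le_iff)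
    then show ?thesis
      using k by (simp add: field_simps)
  qed
  finally show ?thesis
    unfolding eq .
qed

lemma measure_PiM_exists_notin:
  assumes M: "prob_space M" and F: "F \<in> sets M" and I: "finite I"
  shows "measure (Pi\<^sub>M I (\<lambda>_. M)) {t \<in> space (Pi\<^sub>M I (\<lambda>_. M)). \<exists>n\<in>I. t n \<notin> F}
    = 1 - measure M F ^ card I"
proof -
  interpret finite_product_prob_space "\<lambda>_. M" I
    using M I by (simp add: finite_product_prob_space_def finite_product_sigma_finite_def
        finite_product_sigma_finite_axioms_def product_prob_space_def product_prob_space_axioms_def
        product_sigma_finite_def prob_space_imp_sigma_finite)
  have "{t \<in> space (Pi\<^sub>M I (\<lambda>_. M)). \<exists>n\<in>I. t n \<notin> F} = space (Pi\<^sub>M I (\<lambda>_. M)) - Pi\<^sub>E I (\<lambda>_. F)"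
    by (auto simp: space_PiM PiE_def Pi_def)
  moreover have "Pi\<^sub>E I (\<lambda>_. F) \<in> sets (Pi\<^sub>M I (\<lambda>_. M))"
    using F I by (intro sets_PiM_I_finite) auto
  moreover have "measure (Pi\<^sub>M I (\<lambda>_. M)) (Pi\<^sub>E I (\<lambda>_. F)) = measure M F ^ card I"
    using F by (simp add: finite_measure_PiM_emb)
  ultimately show ?thesis
    by (simp add: prob_compl)
qed

lemma half_power_le_if_ceiling_log_le:
  fixes \<delta> :: real
  assumes "0 < \<delta>" "\<lceil>log 2 (1 / \<delta>)\<rceil> \<le> int J"
  shows "(1/2) ^ J \<le> \<delta>"
proof -
  have "log 2 (1 / \<delta>) \<le> real J"
    using assms(2) by linarith
  then have "1 / \<delta> \<le> 2 ^ J"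
    using assms(1) by (simp add: log_le_iff powr_realpow)
  then show ?thesis
    using assms(1) by (simp add: field_simps)
qed

theorem lemma2p1:
  fixes \<mu> :: "nat \<Rightarrow> real ^ 'd" and k J :: nat and \<delta> :: real
  assumes "k \<ge> 2"
    and "inj_on \<mu> {1..k}"
    and "0 < \<delta>" and "\<delta> < 1"
    and "int J \<ge> \<lceil>log 2 (1 / \<delta>)\<rceil>"
  shows "measure (PiM {1..J} (\<lambda>_. sphere_uniform))
           {t \<in> space (PiM {1..J} (\<lambda>_. sphere_uniform)).
              \<exists>n\<in>{1..J}. \<forall>i\<in>{1..k}. \<forall>j\<in>{1..k}. i \<noteq> j \<longrightarrow>
                 \<bar>(\<mu> i - \<mu> j) \<bullet> t n\<bar> \<ge> min_sep \<mu> k / (real k ^ 2 * sqrt (real CARD('d)))}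
         \<ge> 1 - \<delta>"
proof -
  define c where "c = min_sep \<mu> k / (real k ^ 2 * sqrt (real CARD('d)))"
  define F where "F = {s::real^'d. \<exists>i\<in>{1..k}. \<exists>j\<in>{1..k}. i \<noteq> j \<and> \<bar>(\<mu> i - \<mu> j) \<bullet> s\<bar> < c}"
  let ?M = "PiM {1..J} (\<lambda>_. sphere_uniform :: (real^'d) measure)"
  have good_iff: "(\<forall>i\<in>{1..k}. \<forall>j\<in>{1..k}. i \<noteq> j \<longrightarrow> c \<le> \<bar>(\<mu> i - \<mu> j) \<bullet> s\<bar>) \<longleftrightarrow> s \<notin> F" for s
    unfolding F_def by (auto simp: not_less)
  have "F \<in> sets sphere_uniform"
    unfolding F_def sphere_uniform_def by measurable
  then have "measure ?M {t \<in> space ?M. \<exists>n\<in>{1..J}. t n \<notin> F} = 1 - measure sphere_uniform F ^ J"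
    using measure_PiM_exists_notin[OF prob_space_sphere_uniform, of F "{1..J}"] by simp
  moreover have "measure sphere_uniform F ^ J \<le> (1/2) ^ J"
    unfolding F_def c_def using measure_sphere_uniform_small_projection_le_half[OF assms(1,2)]
    by (intro power_mono) auto
  moreover have "(1/2) ^ J \<le> \<delta>"
    using assms(3,5) by (rule half_power_le_if_ceiling_log_le)
  ultimately show ?thesis
    unfolding c_def[symmetric] good_iff by simp
qed

end
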